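(* Let $g_1,\dots,g_m$ be rational maps of degree at least 2 such that $(g_1,\dots,g_m)$ satisfies (A1)–(A3) for $H=\langle g_1,\dots,g_m\rangle$. Let $n\ge2$ and let $f_1,\dots,f_{s+1}$ ($s\ge1$) be mutually distinct elements of $\{g_{\omega_n}\circ\cdots\circ g_{\omega_1}:(\omega_1,\dots,\omega_n)\in\{1,\dots,m\}^n\}$. Then $(f_1,\dots,f_{s+1})$ satisfies (A1)–(A3) for $G=\langle f_1,\dots,f_{s+1}\rangle$. If moreover all $g_i$ are polynomials and $P(H)\setminus\{\infty\}$ is bounded in $\mathbb C$, then $P(G)\setminus\{\infty\}$ is bounded in $\mathbb C$.
   Context: For a semigroup $H$ of non-constant rational maps on $\hat{\mathbb C}$, $F(H)$ is the set of points with a neighbourhood where $H$ is equicontinuous (spherical metric), $J(H)$ its complement. For $H$ generated by $h_1,\dots,h_k$, $P(H)$ is the closure of $\bigcup_{h\in H\cup\{\mathrm{id}\}}h(\text{critical values of }h_1,\dots,h_k)$. A minimal set of $H$ is a non-empty compact $K$ with $K=\overline{\{h(z):h\in H\}}$ for every $z\in K$. For a tuple $(h_1,\dots,h_k)$ generating $H$: (A1) means $P(H)\subset F(H)$; (A2) means $h_i^{-1}(J(H))\cap h_j^{-1}(J(H))=\emptyset$ for $i\ne j$; (A3) means $H$ has at least two minimal sets. *)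

theory Defs
  imports "HOL-Analysis.Analysis" "HOL-Computational_Algebra.Computational_Algebra"
begin

text \<open>The Riemann sphere is modelled as complex option; None is the point at infinity.\<close>

type_synonym rsphere = "complex option"

text \<open>Stereographic embedding of the Riemann sphere onto the unit sphere of C x R (= R^3).
  The spherical (chordal) metric is the Euclidean distance of the images.\<close>
definition stereo :: "rsphere \<Rightarrow> complex \<times> real" where
  "stereo z = (case z of None \<Rightarrow> (0, 1)
     | Some x \<Rightarrow> ((2 * x) / complex_of_real (1 + (cmod x)^2),
                  ((cmod x)^2 - 1) / (1 + (cmod x)^2)))"

definition sdist :: "rsphere \<Rightarrow> rsphere \<Rightarrow> real" where
  "sdist z w = dist (stereo z) (stereo w)"

definition sclosure :: "rsphere set \<Rightarrow> rsphere set" where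
  "sclosure A = {z. stereo z \<in> closure (stereo ` A)}"

definition scompact :: "rsphere set \<Rightarrow> bool" where
  "scompact K \<longleftrightarrow> compact (stereo ` K)"

definition rat_eval :: "complex poly \<Rightarrow> complex poly \<Rightarrow> rsphere \<Rightarrow> rsphere" where
  "rat_eval p q z = (case z of
       Some x \<Rightarrow> (if poly q x = 0 then None else Some (poly p x / poly q x))
     | None \<Rightarrow> (if degree p > degree q then None
               else if degree p = degree q then Some (lead_coeff p / lead_coeff q)
               else Some 0))"

definition rat_map_of_degree :: "(rsphere \<Rightarrow> rsphere) \<Rightarrow> nat \<Rightarrow> bool" where
  "rat_map_of_degree f d \<longleftrightarrow>
     (\<exists>p q. coprime p q \<and> q \<noteq> 0 \<and> f = rat_eval p q \<and> d = max (degree p) (degree q))"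

definition is_polynomial_map :: "(rsphere \<Rightarrow> rsphere) \<Rightarrow> bool" where
  "is_polynomial_map f \<longleftrightarrow> (\<exists>p. f = rat_eval p 1)"

text \<open>Local coordinates: chart_inv z parametrises a neighbourhood of z by t near 0,
  chart w is a local coordinate centred at w.\<close>
definition chart_inv :: "rsphere \<Rightarrow> complex \<Rightarrow> rsphere" where
  "chart_inv z t = (case z of Some a \<Rightarrow> Some (a + t)
                    | None \<Rightarrow> (if t = 0 then None else Some (1 / t)))"

definition chart :: "rsphere \<Rightarrow> rsphere \<Rightarrow> complex" where
  "chart w u = (case w of
       Some b \<Rightarrow> (case u of Some v \<Rightarrow> v - b | None \<Rightarrow> 0)
     | None \<Rightarrow> (case u of Some v \<Rightarrow> 1 / v | None \<Rightarrow> 0))"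

definition critical_point :: "(rsphere \<Rightarrow> rsphere) \<Rightarrow> rsphere \<Rightarrow> bool" where
  "critical_point f z \<longleftrightarrow> deriv (\<lambda>t. chart (f z) (f (chart_inv z t))) 0 = 0"

definition critical_values :: "(rsphere \<Rightarrow> rsphere) list \<Rightarrow> rsphere set" where
  "critical_values hs = {h z | h z. h \<in> set hs \<and> critical_point h z}"

inductive_set gen_semigroup :: "('a \<Rightarrow> 'a) set \<Rightarrow> ('a \<Rightarrow> 'a) set" for S where
  gen: "h \<in> S \<Longrightarrow> h \<in> gen_semigroup S"
| comp: "h1 \<in> gen_semigroup S \<Longrightarrow> h2 \<in> gen_semigroup S \<Longrightarrow> h1 \<circ> h2 \<in> gen_semigroup S"

definition equicont_at :: "(rsphere \<Rightarrow> rsphere) set \<Rightarrow> rsphere \<Rightarrow> bool" where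
  "equicont_at H x \<longleftrightarrow>
     (\<forall>e>0. \<exists>d>0. \<forall>y. sdist x y < d \<longrightarrow> (\<forall>h\<in>H. sdist (h x) (h y) < e))"

definition fatou :: "(rsphere \<Rightarrow> rsphere) set \<Rightarrow> rsphere set" where
  "fatou H = {z. \<exists>r>0. \<forall>x. sdist z x < r \<longrightarrow> equicont_at H x}"

definition julia :: "(rsphere \<Rightarrow> rsphere) set \<Rightarrow> rsphere set" where
  "julia H = UNIV - fatou H"

definition postcrit :: "(rsphere \<Rightarrow> rsphere) list \<Rightarrow> rsphere set" where
  "postcrit hs = sclosure (\<Union>h\<in>insert id (gen_semigroup (set hs)). h ` critical_values hs)"

definition minimal_set :: "(rsphere \<Rightarrow> rsphere) set \<Rightarrow> rsphere set \<Rightarrow> bool" where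
  "minimal_set H K \<longleftrightarrow> K \<noteq> {} \<and> scompact K \<and>
     (\<forall>z\<in>K. K = sclosure {h z | h. h \<in> H})"

definition A1 :: "(rsphere \<Rightarrow> rsphere) list \<Rightarrow> bool" where
  "A1 hs \<longleftrightarrow> postcrit hs \<subseteq> fatou (gen_semigroup (set hs))"

definition A2 :: "(rsphere \<Rightarrow> rsphere) list \<Rightarrow> bool" where
  "A2 hs \<longleftrightarrow> (\<forall>i<length hs. \<forall>j<length hs. i \<noteq> j \<longrightarrow>
     (hs!i) -` julia (gen_semigroup (set hs)) \<inter> (hs!j) -` julia (gen_semigroup (set hs)) = {})"

definition A3 :: "(rsphere \<Rightarrow> rsphere) list \<Rightarrow> bool" where
  "A3 hs \<longleftrightarrow> (\<exists>K1 K2. K1 \<noteq> K2 \<and> minimal_set (gen_semigroup (set hs)) K1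
                        \<and> minimal_set (gen_semigroup (set hs)) K2)"

text \<open>word_map gs [w1,...,wn] = g_wn o ... o g_w1 (0-based indices).\<close>
fun word_map :: "('a \<Rightarrow> 'a) list \<Rightarrow> nat list \<Rightarrow> 'a \<Rightarrow> 'a" where
  "word_map gs [] = id"
| "word_map gs (i # ws) = word_map gs ws \<circ> (gs ! i)"

definition words_of_length :: "('a \<Rightarrow> 'a) list \<Rightarrow> nat \<Rightarrow> ('a \<Rightarrow> 'a) set" where
  "words_of_length gs n =
     {word_map gs ws | ws. length ws = n \<and> set ws \<subseteq> {..<length gs}}"

end

theory Submission
  imports Defs "HOL-Complex_Analysis.Complex_Analysis"
begin

text \<open>
  Let \<open>H = \<langle>g\<^sub>1,\<dots>,g\<^sub>m\<rangle>\<close> and let \<open>G\<close> be generated by distinct words of length \<open>n\<close>,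
  so \<open>G \<subseteq> H\<close>. Then \<open>F(H) \<subseteq> F(G)\<close> and \<open>J(G) \<subseteq> J(H)\<close>. By the chain rule every critical value of a
  word is an \<open>H\<close>-image of a critical value of some \<open>g\<^sub>i\<close>, so \<open>P(G) \<subseteq> P(H) \<subseteq> F(H) \<subseteq> F(G)\<close>;
  this gives (A1), and also the boundedness of \<open>P(G) - {\<infinity>}\<close> without using that the \<open>g\<^sub>i\<close> are
  polynomials. Since rational maps are open, \<open>g\<^sub>i\<^sup>-\<^sup>1(J(H)) \<subseteq> J(H)\<close>; so if two words of the same
  length both sent a point into \<open>J(H)\<close>, the first letter where they differ would violate (A2)
  for \<open>H\<close>. This gives (A2) for \<open>G\<close>. Finally each of two distinct, hence disjoint, minimal sets
  of \<open>H\<close> is a compact \<open>G\<close>-invariant set, so by Zorn's lemma it contains a minimal set of \<open>G\<close>;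
  this gives (A3).
\<close>

section \<open>The chordal metric and the inversion \<open>z \<mapsto> 1/z\<close>\<close>

lemma sdist_nonneg: "0 \<le> sdist z w"
  by (simp add: sdist_def)

lemma sdist_commute: "sdist z w = sdist w z"
  by (simp add: sdist_def dist_commute)

lemma sdist_triangle: "sdist x z \<le> sdist x y + sdist y z"
  by (simp add: sdist_def dist_triangle)

definition sphere_inverse :: "rsphere \<Rightarrow> rsphere" where
  "sphere_inverse z = (case z of None \<Rightarrow> Some 0 | Some a \<Rightarrow> if a = 0 then None else Some (1 / a))"

lemma sphere_inverse_Some_0 [simp]: "sphere_inverse (Some 0) = None"
  and sphere_inverse_None [simp]: "sphere_inverse None = Some 0"
  by (simp_all add: sphere_inverse_def)

lemma sphere_inverse_sphere_inverse [simp]: "sphere_inverse (sphere_inverse z) = z"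
  by (auto simp: sphere_inverse_def split: option.splits)

lemma stereo_sphere_inverse:
  "stereo (sphere_inverse z) = (cnj (fst (stereo z)), - snd (stereo z))"
proof (cases z)
  case (Some a)
  show ?thesis
  proof (cases "a = 0")
    case False
    define N where "N = (cmod a)^2"
    have N: "N > 0" "1 + N \<noteq> 0" "cmod (1 / a) ^ 2 = 1 / N"
      using False by (simp_all add: N_def norm_divide power_divide add_pos_nonneg add_nonneg_eq_0_iff)
    have NC: "complex_of_real (1 + N) \<noteq> 0"
      using N(2) of_real_eq_0_iff by blast
    have cnj_a: "cnj a = complex_of_real N / a"
      using False complex_norm_square[of a] by (simp add: N_def field_simps)
    have "2 * (1 / a) / complex_of_real (1 + 1 / N) = cnj (2 * a / complex_of_real (1 + N))"
      unfolding complex_cnj_divide complex_cnj_mult complex_cnj_numeral complex_cnj_complex_of_real cnj_a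
      using False N NC by (simp add: field_simps)
    moreover have "(1 / N - 1) / (1 + 1 / N) = - ((N - 1) / (1 + N))"
    proof -
      have "1 + 1 / N = (N + 1) / N" "1 / N - 1 = (1 - N) / N" using N(1) by (simp_all add: field_simps)
      then show ?thesis using N(1) by (simp add: add.commute minus_divide_left)
    qed
    ultimately show ?thesis
      using Some False N(3) by (simp add: sphere_inverse_def stereo_def N_def)
  qed (simp add: Some sphere_inverse_def stereo_def)
qed (simp add: sphere_inverse_def stereo_def)

lemma sdist_sphere_inverse: "sdist (sphere_inverse z) (sphere_inverse w) = sdist z w"
  unfolding sdist_def stereo_sphere_inverse
  by (simp add: dist_prod_def dist_norm power2_commute flip: complex_cnj_diff)

lemma sdist_Some_Some_sq:
  "(sdist (Some a) (Some b))^2 = 4 * (cmod (a - b))^2 / ((1 + (cmod a)^2) * (1 + (cmod b)^2))"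
proof -
  obtain x1 y1 where a: "a = Complex x1 y1" by (metis complex.exhaust_sel)
  obtain x2 y2 where b: "b = Complex x2 y2" by (metis complex.exhaust_sel)
  define A where "A = 1 + x1^2 + y1^2"
  define B where "B = 1 + x2^2 + y2^2"
  have AB: "A > 0" "B > 0" by (simp_all add: A_def B_def add_pos_nonneg)
  have norms: "(cmod a)^2 = x1^2 + y1^2" "(cmod b)^2 = x2^2 + y2^2"
    "(cmod (a - b))^2 = (x1 - x2)^2 + (y1 - y2)^2"
    by (simp_all add: a b cmod_power2)
  have "(sdist (Some a) (Some b))^2 = (2*x1/A - 2*x2/B)^2 + (2*y1/A - 2*y2/B)^2
      + ((x1^2 + y1^2 - 1)/A - (x2^2 + y2^2 - 1)/B)^2"
    unfolding sdist_def
    by (simp add: stereo_def dist_norm norm_Pair cmod_power2 a b A_def B_def add.assoc)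
  also have "\<dots> = ((2*x1*B - 2*x2*A)^2 + (2*y1*B - 2*y2*A)^2
      + ((x1^2 + y1^2 - 1)*B - (x2^2 + y2^2 - 1)*A)^2) / (A*B)^2"
    using AB by (simp add: field_simps power2_eq_square)
  also have "\<dots> = 4*((x1 - x2)^2 + (y1 - y2)^2) * (A*B) / (A*B)^2"
    unfolding A_def B_def by algebra
  also have "\<dots> = 4*((x1 - x2)^2 + (y1 - y2)^2) / (A*B)"
    using AB by (simp add: power2_eq_square)
  finally show ?thesis
    by (simp add: norms A_def B_def add.assoc)
qed

lemma sdist_None_Some_ge: "2 / (1 + (cmod b)^2) \<le> sdist None (Some b)"
proof -
  have "1 + (cmod b)^2 > 0"
    by (simp add: add_pos_nonneg)
  then have "2 / (1 + (cmod b)^2) = \<bar>snd (stereo None - stereo (Some b))\<bar>"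
    by (simp add: stereo_def field_simps)
  also have "\<dots> \<le> sdist None (Some b)"
    unfolding sdist_def dist_norm by (metis norm_snd_le prod.collapse real_norm_def)
  finally show ?thesis .
qed

lemma sdist_Some_Some_le: "sdist (Some b) (Some v) \<le> 2 * cmod (v - b)"
proof (rule power2_le_imp_le)
  have "1 \<le> (1 + (cmod b)^2) * (1 + (cmod v)^2)"
    using mult_mono[of 1 "1 + (cmod b)^2" 1 "1 + (cmod v)^2"] by simp
  then have "4 * (cmod (b - v))^2 / ((1 + (cmod b)^2) * (1 + (cmod v)^2)) \<le> 4 * (cmod (b - v))^2"
    by (simp add: divide_le_eq mult_le_cancel_left1)
  then show "(sdist (Some b) (Some v))^2 \<le> (2 * cmod (v - b))^2"
    unfolding sdist_Some_Some_sq by (simp add: power_mult_distrib norm_minus_commute)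
qed simp

fun chart_pole :: "rsphere \<Rightarrow> rsphere" where
  "chart_pole (Some b) = None"
| "chart_pole None = Some 0"

lemma chart_inv_0 [simp]: "chart_inv z 0 = z"
  by (cases z) (auto simp: chart_inv_def)

lemma chart_self [simp]: "chart z z = 0"
  by (cases z) (auto simp: chart_def)

lemma chart_chart_inv [simp]: "chart z (chart_inv z t) = t"
  by (cases z) (auto simp: chart_def chart_inv_def)

lemma chart_inv_ne_chart_pole: "chart_inv z t \<noteq> chart_pole z"
  by (cases z) (auto simp: chart_inv_def)

lemma chart_inv_chart: "y \<noteq> chart_pole z \<Longrightarrow> chart_inv z (chart z y) = y"
  by (cases z; cases y) (auto simp: chart_def chart_inv_def)

lemma chart_inv_None: "chart_inv None t = sphere_inverse (chart_inv (Some 0) t)"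
  by (simp add: chart_inv_def sphere_inverse_def)

lemma chart_None: "chart None y = chart (Some 0) (sphere_inverse y)"
  by (cases y) (auto simp: chart_def sphere_inverse_def)

lemma sdist_chart_inv_Some_less:
  assumes "e > 0"
  shows "\<exists>d>0. \<forall>t. cmod t < d \<longrightarrow> sdist (Some b) (chart_inv (Some b) t) < e"
proof (intro exI[of _ "e/2"] conjI allI impI)
  fix t :: complex
  assume "cmod t < e/2"
  then show "sdist (Some b) (chart_inv (Some b) t) < e"
    using sdist_Some_Some_le[of b "b + t"] by (simp add: chart_inv_def)
qed (use assms in simp)

lemma sdist_chart_inv_less:
  assumes "e > 0"
  shows "\<exists>d>0. \<forall>t. cmod t < d \<longrightarrow> sdist z (chart_inv z t) < e"
proof (cases z)
  case None
  have "sdist None (chart_inv None t) = sdist (Some 0) (chart_inv (Some 0) t)" for t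
    using sdist_sphere_inverse[of "Some 0" "chart_inv (Some 0) t"] by (simp add: chart_inv_None)
  then show ?thesis
    using None sdist_chart_inv_Some_less[OF assms, of 0] by simp
qed (use sdist_chart_inv_Some_less[OF assms] in simp)

lemma cmod_diff_less_if_sdist_Some_Some_less:
  assumes dist: "sdist (Some b) (Some v) < d" and d: "d > 0" "d * (1 + (cmod b)^2) \<le> 1"
  shows "cmod (v - b) < d * (1 + (cmod b)^2)"
proof -
  define A x where "A = 1 + (cmod b)^2" and "x = cmod (v - b)"
  have A: "A \<ge> 1" by (simp add: A_def)
  have "d \<le> d * A"
    using A d(1) by simp
  then have dA: "d * A \<le> 1" "d \<le> 1"
    using d(2) by (simp_all add: A_def)
  have "cmod v \<le> cmod b + x"
    unfolding x_def by (metis add.commute diff_add_cancel norm_triangle_ineq)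
  then have "(cmod v)^2 \<le> (cmod b + x)^2"
    by (simp add: power_mono)
  also have "\<dots> \<le> 2 * (cmod b)^2 + 2 * x^2"
    using sum_squares_bound[of "cmod b" x] by (simp add: power2_sum)
  finally have V: "1 + (cmod v)^2 \<le> 2 * A + 2 * x^2"
    by (simp add: A_def)
  have "(sdist (Some b) (Some v))^2 < d^2"
    using dist sdist_nonneg by (simp add: power_strict_mono)
  then have "4 * x^2 / (A * (1 + (cmod v)^2)) < d^2"
    unfolding sdist_Some_Some_sq A_def x_def by (simp add: norm_minus_commute)
  then have "4 * x^2 < d^2 * (A * (1 + (cmod v)^2))"
    using A by (simp add: divide_less_eq add_pos_nonneg)
  also have "\<dots> \<le> d^2 * (A * (2 * A + 2 * x^2))"
    using V A by (intro mult_left_mono) auto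
  also have "\<dots> = 2 * (d * A)^2 + 2 * (d * (d * A)) * x^2"
    by (simp add: power2_eq_square algebra_simps)
  also have "\<dots> \<le> 2 * (d * A)^2 + 2 * x^2"
    using d dA A mult_le_one[of d "d * A"] by (simp add: mult_right_mono)
  finally show ?thesis
    using d A power2_less_imp_less[of x "d * A"] unfolding A_def x_def by simp
qed

lemma chart_Some_less:
  assumes "e > 0"
  shows "\<exists>d>0. \<forall>y. sdist (Some b) y < d \<longrightarrow> y \<noteq> None \<and> cmod (chart (Some b) y) < e"
proof -
  define A where "A = 1 + (cmod b)^2"
  define d where "d = min (1/A) (e/A)"
  have A: "A \<ge> 1" by (simp add: A_def)
  have d: "d > 0" "d * A \<le> 1" "d * A \<le> e" "d < 2 / A"
    using A assms by (auto simp: d_def min_def field_simps)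
  have "y \<noteq> None \<and> cmod (chart (Some b) y) < e" if y: "sdist (Some b) y < d" for y
  proof
    show "y \<noteq> None"
    proof
      assume "y = None"
      then show False
        using y d(4) sdist_None_Some_ge[of b] by (simp add: sdist_commute A_def)
    qed
    then obtain v where v: "y = Some v" by auto
    then have "cmod (v - b) < d * A"
      using cmod_diff_less_if_sdist_Some_Some_less[of b v d] y d unfolding A_def by simp
    then show "cmod (chart (Some b) y) < e"
      using d(3) unfolding v chart_def by simp
  qed
  then show ?thesis using d(1) by blast
qed

lemma chart_less:
  assumes "e > 0"
  shows "\<exists>d>0. \<forall>y. sdist z y < d \<longrightarrow> y \<noteq> chart_pole z \<and> cmod (chart z y) < e"
proof (cases z)
  case None
  obtain d where d: "d > 0"
    "\<forall>y. sdist (Some 0) y < d \<longrightarrow> y \<noteq> None \<and> cmod (chart (Some 0) y) < e"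
    using chart_Some_less[OF assms] by blast
  have "y \<noteq> chart_pole z \<and> cmod (chart z y) < e" if "sdist z y < d" for y
  proof -
    have "sdist (Some 0) (sphere_inverse y) < d"
      using that None sdist_sphere_inverse[of None y] by simp
    then have "sphere_inverse y \<noteq> None \<and> cmod (chart (Some 0) (sphere_inverse y)) < e"
      using d by blast
    then show ?thesis
      using None by (auto simp: chart_None)
  qed
  then show ?thesis using d(1) by blast
qed (use chart_Some_less[OF assms] in auto)

section \<open>Holomorphic maps of the sphere\<close>

definition sphere_continuous_at :: "(rsphere \<Rightarrow> rsphere) \<Rightarrow> rsphere \<Rightarrow> bool" where
  "sphere_continuous_at f z \<longleftrightarrow>
     (\<forall>e>0. \<exists>d>0. \<forall>y. sdist z y < d \<longrightarrow> sdist (f z) (f y) < e)"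

definition sphere_open_at :: "(rsphere \<Rightarrow> rsphere) \<Rightarrow> rsphere \<Rightarrow> bool" where
  "sphere_open_at f z \<longleftrightarrow>
     (\<forall>e>0. \<exists>d>0. \<forall>y. sdist (f z) y < d \<longrightarrow> (\<exists>x. sdist z x < e \<and> f x = y))"

definition local_rep :: "(rsphere \<Rightarrow> rsphere) \<Rightarrow> rsphere \<Rightarrow> complex \<Rightarrow> complex" where
  "local_rep f z = (\<lambda>t. chart (f z) (f (chart_inv z t)))"

definition sphere_holomorphic_at :: "(rsphere \<Rightarrow> rsphere) \<Rightarrow> rsphere \<Rightarrow> bool" where
  "sphere_holomorphic_at f z \<longleftrightarrow> (\<exists>r>0.
     (\<forall>t\<in>ball 0 r. f (chart_inv z t) \<noteq> chart_pole (f z)) \<and> local_rep f z holomorphic_on ball 0 r)"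

definition sphere_nonconstant_holomorphic_at :: "(rsphere \<Rightarrow> rsphere) \<Rightarrow> rsphere \<Rightarrow> bool" where
  "sphere_nonconstant_holomorphic_at f z \<longleftrightarrow>
     sphere_holomorphic_at f z \<and> (\<forall>r>0. \<exists>t\<in>ball 0 r. local_rep f z t \<noteq> 0)"

lemma local_rep_0 [simp]: "local_rep f z 0 = 0"
  by (simp add: local_rep_def)

lemma critical_point_iff_deriv_local_rep: "critical_point f z \<longleftrightarrow> deriv (local_rep f z) 0 = 0"
  by (simp add: critical_point_def local_rep_def)

lemma sphere_holomorphic_at_id: "sphere_holomorphic_at id z"
  unfolding sphere_holomorphic_at_def local_rep_def using chart_inv_ne_chart_pole
  by (intro exI[of _ 1]) auto

lemma not_critical_point_id: "\<not> critical_point id z"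
  by (simp add: critical_point_iff_deriv_local_rep local_rep_def)

lemma continuous_on_ball_image_small:
  fixes u :: "'a::metric_space \<Rightarrow> 'b::metric_space"
  assumes "continuous_on (ball a r) u" "r > 0" "s > 0"
  shows "\<exists>r'>0. r' \<le> r \<and> u ` ball a r' \<subseteq> ball (u a) s"
proof -
  have "open (ball a r \<inter> u -` ball (u a) s)"
    using continuous_open_preimage[OF assms(1) open_ball open_ball] .
  moreover have "a \<in> ball a r \<inter> u -` ball (u a) s"
    using assms by simp
  ultimately obtain e where "e > 0" "ball a e \<subseteq> ball a r \<inter> u -` ball (u a) s"
    using openE by blast
  then show ?thesis
    using assms(2) by (intro exI[of _ "min e r"]) auto
qed

lemma local_rep_comp_near:
  assumes h: "sphere_holomorphic_at h z" and g: "sphere_holomorphic_at g (h z)"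
  obtains r s where "r > 0" "s > 0"
    "local_rep h z holomorphic_on ball 0 r" "local_rep g (h z) holomorphic_on ball 0 s"
    "local_rep h z ` ball 0 r \<subseteq> ball 0 s"
    "\<forall>t\<in>ball 0 r. (g \<circ> h) (chart_inv z t) \<noteq> chart_pole ((g \<circ> h) z)"
    "\<forall>t\<in>ball 0 r. local_rep (g \<circ> h) z t = local_rep g (h z) (local_rep h z t)"
proof -
  define u where "u = local_rep h z"
  obtain rh where rh: "rh > 0" "\<forall>t\<in>ball 0 rh. h (chart_inv z t) \<noteq> chart_pole (h z)"
    "u holomorphic_on ball 0 rh"
    using h unfolding sphere_holomorphic_at_def u_def by blast
  obtain s where s: "s > 0" "\<forall>t\<in>ball 0 s. g (chart_inv (h z) t) \<noteq> chart_pole (g (h z))"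
    "local_rep g (h z) holomorphic_on ball 0 s"
    using g unfolding sphere_holomorphic_at_def by blast
  obtain r where r: "r > 0" "r \<le> rh" "u ` ball 0 r \<subseteq> ball 0 s"
    using continuous_on_ball_image_small[OF holomorphic_on_imp_continuous_on[OF rh(3)] rh(1) s(1)]
    by (auto simp: u_def)
  have hu: "h (chart_inv z t) = chart_inv (h z) (u t)" if "t \<in> ball 0 r" for t
    using rh(2) that r(2) chart_inv_chart unfolding u_def local_rep_def
    by (metis mem_ball order_less_le_trans)
  show ?thesis
  proof (rule that[OF r(1) s(1) _ s(3)])
    show "local_rep h z holomorphic_on ball 0 r"
      using rh(3) r(2) unfolding u_def by (auto intro: holomorphic_on_subset)
    show "local_rep h z ` ball 0 r \<subseteq> ball 0 s"
      using r(3) unfolding u_def .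
    show "\<forall>t\<in>ball 0 r. (g \<circ> h) (chart_inv z t) \<noteq> chart_pole ((g \<circ> h) z)"
      using hu s(2) r(3) by (simp add: image_subset_iff)
    show "\<forall>t\<in>ball 0 r. local_rep (g \<circ> h) z t = local_rep g (h z) (local_rep h z t)"
      using hu unfolding local_rep_def u_def by simp
  qed
qed

lemma sphere_holomorphic_at_comp:
  assumes "sphere_holomorphic_at h z" "sphere_holomorphic_at g (h z)"
  shows "sphere_holomorphic_at (g \<circ> h) z"
proof -
  obtain r s where rs: "r > 0" "local_rep h z holomorphic_on ball 0 r"
    "local_rep g (h z) holomorphic_on ball 0 s" "local_rep h z ` ball 0 r \<subseteq> ball 0 s"
    "\<forall>t\<in>ball 0 r. (g \<circ> h) (chart_inv z t) \<noteq> chart_pole ((g \<circ> h) z)"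
    "\<forall>t\<in>ball 0 r. local_rep (g \<circ> h) z t = local_rep g (h z) (local_rep h z t)"
    using local_rep_comp_near[OF assms] by metis
  have "(local_rep g (h z) \<circ> local_rep h z) holomorphic_on ball 0 r"
    using holomorphic_on_compose_gen[OF rs(2,3,4)] .
  then have "local_rep (g \<circ> h) z holomorphic_on ball 0 r"
    by (rule holomorphic_transform) (simp add: rs(6))
  then show ?thesis
    unfolding sphere_holomorphic_at_def using rs(1,5) by blast
qed

lemma deriv_local_rep_comp:
  assumes "sphere_holomorphic_at h z" "sphere_holomorphic_at g (h z)"
  shows "deriv (local_rep (g \<circ> h) z) 0 = deriv (local_rep g (h z)) 0 * deriv (local_rep h z) 0"
proof -
  obtain r s where rs: "r > 0" "s > 0" "local_rep h z holomorphic_on ball 0 r"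
    "local_rep g (h z) holomorphic_on ball 0 s"
    "\<forall>t\<in>ball 0 r. local_rep (g \<circ> h) z t = local_rep g (h z) (local_rep h z t)"
    using local_rep_comp_near[OF assms] by metis
  have "(local_rep h z has_field_derivative deriv (local_rep h z) 0) (at 0)"
    using holomorphic_derivI[OF rs(3) open_ball, of 0] rs(1) by simp
  moreover have "(local_rep g (h z) has_field_derivative deriv (local_rep g (h z)) 0) (at 0)"
    using holomorphic_derivI[OF rs(4) open_ball, of 0] rs(2) by simp
  ultimately have "((local_rep g (h z) \<circ> local_rep h z) has_field_derivative
      deriv (local_rep g (h z)) 0 * deriv (local_rep h z) 0) (at 0)"
    using DERIV_chain[of "local_rep g (h z)" _ "local_rep h z"] by simp
  then have "(local_rep (g \<circ> h) z has_field_derivative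
      deriv (local_rep g (h z)) 0 * deriv (local_rep h z) 0) (at 0)"
    by (rule has_field_derivative_transform_within_open[OF _ open_ball[of 0 r]])
      (use rs(1,5) in auto)
  then show ?thesis
    by (rule DERIV_imp_deriv)
qed

lemma critical_point_comp:
  assumes "sphere_holomorphic_at h z" "sphere_holomorphic_at g (h z)" "critical_point (g \<circ> h) z"
  shows "critical_point h z \<or> critical_point g (h z)"
  using assms deriv_local_rep_comp[OF assms(1,2)] by (auto simp: critical_point_iff_deriv_local_rep)

lemma sphere_holomorphic_at_imp_continuous_at:
  assumes "sphere_holomorphic_at f z"
  shows "sphere_continuous_at f z"
  unfolding sphere_continuous_at_def
proof (intro allI impI)
  fix e :: real
  assume "e > 0"
  obtain r where r: "r > 0" "\<forall>t\<in>ball 0 r. f (chart_inv z t) \<noteq> chart_pole (f z)"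
    "local_rep f z holomorphic_on ball 0 r"
    using assms unfolding sphere_holomorphic_at_def by blast
  obtain d2 where d2: "d2 > 0" "\<forall>s. cmod s < d2 \<longrightarrow> sdist (f z) (chart_inv (f z) s) < e"
    using sdist_chart_inv_less[OF \<open>e > 0\<close>] by blast
  obtain r1 where r1: "r1 > 0" "r1 \<le> r" "local_rep f z ` ball 0 r1 \<subseteq> ball 0 d2"
    using continuous_on_ball_image_small[OF holomorphic_on_imp_continuous_on[OF r(3)] r(1) d2(1)]
    by auto
  obtain d where d: "d > 0" "\<forall>y. sdist z y < d \<longrightarrow> y \<noteq> chart_pole z \<and> cmod (chart z y) < r1"
    using chart_less[OF r1(1)] by blast
  have "sdist (f z) (f y) < e" if y: "sdist z y < d" for y
  proof -
    define t where "t = chart z y"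
    have y_t: "y = chart_inv z t" and t: "t \<in> ball 0 r1"
      using d y chart_inv_chart unfolding t_def by auto
    then have "f y \<noteq> chart_pole (f z)"
      using r(2) r1(2) by auto
    then have "f y = chart_inv (f z) (local_rep f z t)"
      unfolding local_rep_def y_t by (simp add: chart_inv_chart)
    moreover have "cmod (local_rep f z t) < d2"
      using r1(3) t by fastforce
    ultimately show ?thesis using d2 by simp
  qed
  then show "\<exists>d>0. \<forall>y. sdist z y < d \<longrightarrow> sdist (f z) (f y) < e"
    using d(1) by blast
qed

lemma local_rep_image_contains_ball:
  assumes f: "sphere_nonconstant_holomorphic_at f z" and "\<epsilon> > 0"
  obtains \<rho> where "\<rho> > 0" "\<forall>w\<in>ball 0 \<rho>. \<exists>t. cmod t < \<epsilon> \<and> f (chart_inv z t) = chart_inv (f z) w"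
proof -
  obtain r where r: "r > 0" "\<forall>t\<in>ball 0 r. f (chart_inv z t) \<noteq> chart_pole (f z)"
    "local_rep f z holomorphic_on ball 0 r"
    using f unfolding sphere_nonconstant_holomorphic_at_def sphere_holomorphic_at_def by blast
  define S where "S = ball (0::complex) (min r \<epsilon>)"
  have "0 \<in> S" using r(1) \<open>\<epsilon> > 0\<close> by (simp add: S_def)
  have "\<not> local_rep f z constant_on S"
  proof
    assume "local_rep f z constant_on S"
    then have "\<forall>t\<in>S. local_rep f z t = 0"
      using \<open>0 \<in> S\<close> unfolding constant_on_def by force
    moreover obtain t where "t \<in> S" "local_rep f z t \<noteq> 0"
      using f r(1) \<open>\<epsilon> > 0\<close> unfolding sphere_nonconstant_holomorphic_at_def S_def
      by (metis min_less_iff_conj)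
    ultimately show False by blast
  qed
  then have "open (local_rep f z ` S)"
    using r(3) by (intro open_mapping_thm[of _ S S]) (auto simp: S_def intro: holomorphic_on_subset)
  moreover have "0 \<in> local_rep f z ` S"
    using \<open>0 \<in> S\<close> local_rep_0 by (metis image_eqI)
  ultimately obtain \<rho> where \<rho>: "\<rho> > 0" "ball 0 \<rho> \<subseteq> local_rep f z ` S"
    using openE by blast
  have "\<exists>t. cmod t < \<epsilon> \<and> f (chart_inv z t) = chart_inv (f z) w" if w: "w \<in> ball 0 \<rho>" for w
  proof -
    obtain t where t: "t \<in> S" "local_rep f z t = w"
      using \<rho>(2) w by blast
    then have "f (chart_inv z t) = chart_inv (f z) w"
      using r(2) by (auto simp: S_def local_rep_def chart_inv_chart)
    then show ?thesis
      using t(1) by (auto simp: S_def)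
  qed
  then show ?thesis
    using that \<rho>(1) by blast
qed

lemma sphere_nonconstant_holomorphic_at_imp_open_at:
  assumes "sphere_nonconstant_holomorphic_at f z"
  shows "sphere_open_at f z"
  unfolding sphere_open_at_def
proof (intro allI impI)
  fix e :: real
  assume "e > 0"
  obtain \<epsilon> where \<epsilon>: "\<epsilon> > 0" "\<forall>t. cmod t < \<epsilon> \<longrightarrow> sdist z (chart_inv z t) < e"
    using sdist_chart_inv_less[OF \<open>e > 0\<close>] by blast
  obtain \<rho> where \<rho>: "\<rho> > 0" "\<forall>w\<in>ball 0 \<rho>. \<exists>t. cmod t < \<epsilon> \<and> f (chart_inv z t) = chart_inv (f z) w"
    using local_rep_image_contains_ball[OF assms \<epsilon>(1)] by blast
  obtain d where d: "d > 0"
    "\<forall>y. sdist (f z) y < d \<longrightarrow> y \<noteq> chart_pole (f z) \<and> cmod (chart (f z) y) < \<rho>"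
    using chart_less[OF \<rho>(1)] by blast
  have "\<exists>x. sdist z x < e \<and> f x = y" if y: "sdist (f z) y < d" for y
  proof -
    have "chart (f z) y \<in> ball 0 \<rho>"
      using d y by simp
    then obtain t where "cmod t < \<epsilon>" "f (chart_inv z t) = chart_inv (f z) (chart (f z) y)"
      using \<rho>(2) by blast
    then show ?thesis
      using \<epsilon>(2) d y by (metis chart_inv_chart)
  qed
  then show "\<exists>d>0. \<forall>y. sdist (f z) y < d \<longrightarrow> (\<exists>x. sdist z x < e \<and> f x = y)"
    using d(1) by blast
qed

lemma chart_sphere_inverse:
  assumes "w = None \<or> w = Some 0"
  shows "chart (sphere_inverse w) (sphere_inverse y) = chart w y"
proof (cases "w = None")
  case False
  then have "w = Some 0" using assms by blast
  then show ?thesis using chart_None[of "sphere_inverse y"] by simp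
qed (simp add: chart_None)

lemma sphere_nonconstant_holomorphic_at_sphere_inverse_comp:
  assumes f: "sphere_nonconstant_holomorphic_at f z" and fz: "f z = None \<or> f z = Some 0"
  shows "sphere_nonconstant_holomorphic_at (sphere_inverse \<circ> f) z"
proof -
  have rep: "local_rep (sphere_inverse \<circ> f) z = local_rep f z"
    using chart_sphere_inverse[OF fz] by (simp add: local_rep_def)
  have pole: "sphere_inverse y \<noteq> chart_pole (sphere_inverse (f z))" if "y \<noteq> chart_pole (f z)" for y
    using fz that by (auto simp: sphere_inverse_def split: option.splits)
  obtain r where "r > 0" "\<forall>t\<in>ball 0 r. f (chart_inv z t) \<noteq> chart_pole (f z)"
    "local_rep f z holomorphic_on ball 0 r"
    using f unfolding sphere_nonconstant_holomorphic_at_def sphere_holomorphic_at_def by blast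
  then have "sphere_holomorphic_at (sphere_inverse \<circ> f) z"
    unfolding sphere_holomorphic_at_def rep using pole by auto
  then show ?thesis
    using f unfolding sphere_nonconstant_holomorphic_at_def rep by blast
qed

lemma sphere_nonconstant_holomorphic_atI:
  assumes r: "r > 0" and f: "\<forall>t\<in>ball 0 r. f (chart_inv z t) = Some (\<phi> t)"
    and hol: "\<phi> holomorphic_on ball 0 r"
    and nonconst: "\<forall>r'>0. \<exists>t\<in>ball 0 r'. \<phi> t \<noteq> \<phi> 0"
  shows "sphere_nonconstant_holomorphic_at f z"
proof -
  have fz: "f z = Some (\<phi> 0)"
    using bspec[OF f, of 0] r by simp
  have rep: "local_rep f z t = \<phi> t - \<phi> 0" if "t \<in> ball 0 r" for t
  proof -
    have "f (chart_inv z t) = Some (\<phi> t)"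
      using f that by blast
    then show ?thesis
      using fz by (simp add: local_rep_def chart_def)
  qed
  have "(\<lambda>t. \<phi> t - \<phi> 0) holomorphic_on ball 0 r"
    by (intro holomorphic_on_diff hol holomorphic_on_const)
  then have "local_rep f z holomorphic_on ball 0 r"
    by (rule holomorphic_transform) (simp add: rep)
  then have "sphere_holomorphic_at f z"
    unfolding sphere_holomorphic_at_def using r f fz by auto
  moreover have "\<exists>t\<in>ball 0 r'. local_rep f z t \<noteq> 0" if r': "r' > 0" for r'
  proof -
    obtain t where "t \<in> ball 0 (min r r')" "\<phi> t \<noteq> \<phi> 0"
      using nonconst r r' by (metis min_less_iff_conj)
    then show ?thesis using rep[of t] by (intro bexI[of _ t]) simp_all
  qed
  ultimately show ?thesis
    unfolding sphere_nonconstant_holomorphic_at_def by blast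
qed

section \<open>Rational maps are open and holomorphic\<close>

lemma poly_nonzero_near:
  fixes P :: "complex poly"
  assumes "poly P a \<noteq> 0"
  shows "\<exists>r>0. \<forall>t\<in>ball 0 r. poly P (a + t) \<noteq> 0"
proof -
  have "continuous (at 0) (\<lambda>t. poly P (a + t))"
    by (intro continuous_intros)
  then obtain e where "e > 0" "\<forall>t. dist 0 t < e \<longrightarrow> poly P (a + t) \<noteq> 0"
    using continuous_at_avoid[of 0 "\<lambda>t. poly P (a + t)"] assms by auto
  then show ?thesis by auto
qed

lemma infinite_image_punctured_ball:
  assumes "r > 0" "inj_on f (ball (0::complex) r - {0})"
  shows "infinite (f ` (ball 0 r - {0}))"
proof -
  have "complex_of_real (r/2) \<in> ball 0 r - {0}"
    using assms(1) by simp
  moreover have "open (ball (0::complex) r - {0})"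
    by (simp add: open_delete)
  ultimately have "infinite (ball (0::complex) r - {0})"
    using finite_imp_not_open by blast
  then show ?thesis
    using assms(2) finite_imageD by blast
qed

lemma coprime_poly_no_common_root:
  fixes p q :: "complex poly"
  assumes "coprime p q" "poly p a = 0" "poly q a = 0"
  shows False
proof -
  have "[:-a, 1:] dvd p" "[:-a, 1:] dvd q"
    using assms by (simp_all add: poly_eq_0_iff_dvd)
  then have "is_unit [:-a, 1:]"
    using assms(1) coprime_common_divisor by blast
  then show False
    using is_unit_iff_degree[of "[:-a, 1:]"] by simp
qed

lemma coprime_poly_nonzero:
  fixes p q :: "'a::field poly"
  assumes "coprime p q" "max (degree p) (degree q) \<ge> 1"
  shows "p \<noteq> 0"
proof
  assume "p = 0"
  then have "degree q = 0"
    using assms(1) is_unit_iff_degree[of q] by fastforce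
  then show False using assms(2) \<open>p = 0\<close> by simp
qed

lemma poly_eq_0_if_infinite_roots:
  fixes q :: "complex poly"
  assumes "infinite X" "\<forall>x\<in>X. poly q x = 0"
  shows "q = 0"
  using assms poly_roots_finite[of q] finite_subset[of X "{x. poly q x = 0}"] by blast

lemma coprime_poly_ratio_not_constant:
  fixes p q :: "complex poly"
  assumes "coprime p q" "q \<noteq> 0" "max (degree p) (degree q) \<ge> 1" "infinite X"
    and const: "\<forall>x\<in>X. poly p x = c * poly q x"
  shows False
proof -
  have "p = smult c q"
    using poly_eq_0_if_infinite_roots[OF assms(4), of "p - smult c q"] const by simp
  then have "is_unit q"
    using assms(1) coprime_common_divisor[of p q q] by (simp add: dvd_smult)
  then have "degree q = 0"
    using is_unit_iff_degree assms(2) by blast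
  then show False
    using assms(3) \<open>p = smult c q\<close> by (simp split: if_splits)
qed

lemma poly_inverse:
  fixes p :: "'a::field poly"
  assumes "t \<noteq> 0"
  shows "poly p (1 / t) = poly (reflect_poly p) t / t ^ degree p"
  using poly_reflect_poly_nz[OF assms, of p] assms by (simp add: field_simps inverse_eq_divide)

lemma rat_eval_swap:
  fixes p q :: "complex poly"
  assumes "coprime p q" "p \<noteq> 0" "q \<noteq> 0"
  shows "rat_eval q p = sphere_inverse \<circ> rat_eval p q"
proof
  fix z
  show "rat_eval q p z = (sphere_inverse \<circ> rat_eval p q) z"
  proof (cases z)
    case (Some x)
    then show ?thesis
      using coprime_poly_no_common_root[OF assms(1), of x]
      by (auto simp: rat_eval_def sphere_inverse_def)
  next
    case None
    have "lead_coeff p \<noteq> 0" "lead_coeff q \<noteq> 0"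
      using assms(2,3) by simp_all
    then show ?thesis
      using None by (cases "degree p = degree q") (auto simp: rat_eval_def sphere_inverse_def)
  qed
qed

lemma rat_eval_Some_eq_Some:
  assumes "rat_eval p q (Some x) = Some v"
  shows "poly q x \<noteq> 0" "v = poly p x / poly q x"
  using assms by (auto simp: rat_eval_def split: if_splits)

lemma rat_eval_not_constant_near:
  fixes p q :: "complex poly" and g :: "complex \<Rightarrow> complex"
  assumes cp: "coprime p q" and q: "q \<noteq> 0" and deg: "max (degree p) (degree q) \<ge> 1"
    and r: "r > 0" and inj: "inj_on g (ball 0 r - {0})"
    and val: "\<forall>t\<in>ball 0 r - {0}. rat_eval p q (Some (g t)) = Some (\<phi> t)"
  shows "\<exists>t\<in>ball 0 r. \<phi> t \<noteq> c"
proof -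
  have "infinite (g ` (ball 0 r - {0}))"
    using infinite_image_punctured_ball[OF r inj] .
  then obtain t where t: "t \<in> ball 0 r - {0}" "poly p (g t) \<noteq> c * poly q (g t)"
    using coprime_poly_ratio_not_constant[OF cp q deg] by blast
  then have "poly q (g t) \<noteq> 0" "\<phi> t = poly p (g t) / poly q (g t)"
    using rat_eval_Some_eq_Some val by blast+
  then show ?thesis
    using t by (intro bexI[of _ t]) (auto simp: divide_eq_eq)
qed

lemma rat_eval_nonconstant_holomorphic_at_Some:
  fixes p q :: "complex poly"
  assumes cp: "coprime p q" and q: "q \<noteq> 0" "poly q a \<noteq> 0"
    and deg: "max (degree p) (degree q) \<ge> 1"
  shows "sphere_nonconstant_holomorphic_at (rat_eval p q) (Some a)"
proof -
  obtain r where r: "r > 0" "\<forall>t\<in>ball 0 r. poly q (a + t) \<noteq> 0"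
    using poly_nonzero_near[OF q(2)] by blast
  define \<phi> where "\<phi> t = poly p (a + t) / poly q (a + t)" for t
  have val: "\<forall>t\<in>ball 0 r. rat_eval p q (chart_inv (Some a) t) = Some (\<phi> t)"
    using r(2) by (simp add: rat_eval_def chart_inv_def \<phi>_def)
  show ?thesis
  proof (rule sphere_nonconstant_holomorphic_atI[OF r(1) val])
    show "\<phi> holomorphic_on ball 0 r"
      unfolding \<phi>_def using r(2) by (intro holomorphic_intros) auto
    show "\<forall>r'>0. \<exists>t\<in>ball 0 r'. \<phi> t \<noteq> \<phi> 0"
    proof (intro allI impI)
      fix r' :: real
      assume "r' > 0"
      then have "\<exists>t\<in>ball 0 (min r r'). \<phi> t \<noteq> \<phi> 0"
        using val r(1) by (intro rat_eval_not_constant_near[OF cp q(1) deg, where g = "\<lambda>t. a + t"])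
          (auto simp: inj_on_def chart_inv_def)
      then show "\<exists>t\<in>ball 0 r'. \<phi> t \<noteq> \<phi> 0"
        by auto
    qed
  qed
qed

lemma rat_eval_near_infinity:
  fixes p q :: "complex poly"
  assumes q: "q \<noteq> 0" and le: "degree p \<le> degree q"
  obtains r where "r > 0" "\<forall>t\<in>ball 0 r. poly (reflect_poly q) t \<noteq> 0"
    "\<forall>t\<in>ball 0 r. rat_eval p q (chart_inv None t)
       = Some (t ^ (degree q - degree p) * poly (reflect_poly p) t / poly (reflect_poly q) t)"
proof -
  define P Q where "P = reflect_poly p" and "Q = reflect_poly q"
  obtain r where r: "r > 0" "\<forall>t\<in>ball 0 r. poly Q (0 + t) \<noteq> 0"
    using poly_nonzero_near[of Q 0] q by (auto simp: Q_def poly_0_coeff_0)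
  have "rat_eval p q (chart_inv None t) = Some (t ^ (degree q - degree p) * poly P t / poly Q t)"
    if t: "t \<in> ball 0 r" for t
  proof (cases "t = 0")
    case True
    then show ?thesis
      using le by (auto simp: rat_eval_def chart_inv_def P_def Q_def poly_0_coeff_0)
  next
    case False
    have "t ^ degree q = t ^ (degree q - degree p) * t ^ degree p"
      using le by (simp flip: power_add)
    then show ?thesis
      using False r(2) t by (simp add: rat_eval_def chart_inv_def poly_inverse P_def Q_def field_simps)
  qed
  then show ?thesis
    using that r unfolding P_def Q_def by simp
qed

lemma rat_eval_nonconstant_holomorphic_at_None:
  fixes p q :: "complex poly"
  assumes cp: "coprime p q" and q: "q \<noteq> 0" and le: "degree p \<le> degree q"
    and deg: "max (degree p) (degree q) \<ge> 1"
  shows "sphere_nonconstant_holomorphic_at (rat_eval p q) None"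
proof -
  define \<phi> where
    "\<phi> t = t ^ (degree q - degree p) * poly (reflect_poly p) t / poly (reflect_poly q) t" for t
  obtain r where r: "r > 0" "\<forall>t\<in>ball 0 r. poly (reflect_poly q) t \<noteq> 0"
    and val: "\<forall>t\<in>ball 0 r. rat_eval p q (chart_inv None t) = Some (\<phi> t)"
    using rat_eval_near_infinity[OF q le] unfolding \<phi>_def by blast
  have val': "\<forall>t\<in>ball 0 r - {0}. rat_eval p q (Some (1 / t)) = Some (\<phi> t)"
  proof
    fix t :: complex
    assume t: "t \<in> ball 0 r - {0}"
    then have "rat_eval p q (chart_inv None t) = Some (\<phi> t)"
      using val by blast
    then show "rat_eval p q (Some (1 / t)) = Some (\<phi> t)"
      using t by (simp add: chart_inv_def)
  qed
  show ?thesis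
  proof (rule sphere_nonconstant_holomorphic_atI[OF r(1) val])
    show "\<phi> holomorphic_on ball 0 r"
      unfolding \<phi>_def using r(2) by (intro holomorphic_intros) auto
    show "\<forall>r'>0. \<exists>t\<in>ball 0 r'. \<phi> t \<noteq> \<phi> 0"
    proof (intro allI impI)
      fix r' :: real
      assume "r' > 0"
      then have "\<exists>t\<in>ball 0 (min r r'). \<phi> t \<noteq> \<phi> 0"
        using val' r(1) by (intro rat_eval_not_constant_near[OF cp q deg, where g = "\<lambda>t. 1 / t"])
          (auto simp: inj_on_def)
      then show "\<exists>t\<in>ball 0 r'. \<phi> t \<noteq> \<phi> 0"
        by auto
    qed
  qed
qed

text \<open>At a pole of \<open>p/q\<close> we pass to \<open>q/p\<close>, which vanishes there, and compose with \<open>1/z\<close>.\<close>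

lemma rat_eval_nonconstant_holomorphic_at_pole:
  fixes p q :: "complex poly"
  assumes cp: "coprime p q" and p: "p \<noteq> 0" and q: "q \<noteq> 0"
    and nc: "sphere_nonconstant_holomorphic_at (rat_eval q p) z" and z: "rat_eval q p z = Some 0"
  shows "sphere_nonconstant_holomorphic_at (rat_eval p q) z"
proof -
  have "rat_eval p q = sphere_inverse \<circ> rat_eval q p"
    using rat_eval_swap[of q p] cp p q by (simp add: coprime_commute)
  then show ?thesis
    using sphere_nonconstant_holomorphic_at_sphere_inverse_comp[OF nc] z by simp
qed

lemma rat_eval_nonconstant_holomorphic_at:
  fixes p q :: "complex poly"
  assumes cp: "coprime p q" and q: "q \<noteq> 0" and deg: "max (degree p) (degree q) \<ge> 1"
  shows "sphere_nonconstant_holomorphic_at (rat_eval p q) z"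
proof -
  have p: "p \<noteq> 0"
    using coprime_poly_nonzero[OF cp deg] .
  have cp': "coprime q p" and deg': "max (degree q) (degree p) \<ge> 1"
    using cp deg by (simp_all add: coprime_commute max.commute)
  show ?thesis
  proof (cases z)
    case None
    show ?thesis
    proof (cases "degree p \<le> degree q")
      case False
      then have "rat_eval q p None = Some 0"
        by (simp add: rat_eval_def)
      then show ?thesis
        using None False rat_eval_nonconstant_holomorphic_at_pole[OF cp p q]
          rat_eval_nonconstant_holomorphic_at_None[OF cp' p _ deg'] by simp
    qed (use None rat_eval_nonconstant_holomorphic_at_None[OF cp q _ deg] in simp)
  next
    case (Some a)
    show ?thesis
    proof (cases "poly q a = 0")
      case True
      then have "poly p a \<noteq> 0" "rat_eval q p (Some a) = Some 0"
        using coprime_poly_no_common_root[OF cp] by (auto simp: rat_eval_def)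
      then show ?thesis
        using Some rat_eval_nonconstant_holomorphic_at_pole[OF cp p q]
          rat_eval_nonconstant_holomorphic_at_Some[OF cp' p _ deg'] by simp
    qed (use Some rat_eval_nonconstant_holomorphic_at_Some[OF cp q _ deg] in simp)
  qed
qed

lemma rat_map_nonconstant_holomorphic_at:
  assumes "rat_map_of_degree f d" "d \<ge> 1"
  shows "sphere_nonconstant_holomorphic_at f z"
  using assms rat_eval_nonconstant_holomorphic_at unfolding rat_map_of_degree_def by blast

section \<open>Closures, compactness and minimal sets\<close>

lemma sclosure_iff: "z \<in> sclosure A \<longleftrightarrow> (\<forall>e>0. \<exists>a\<in>A. sdist z a < e)"
  unfolding sclosure_def closure_approachable by (auto simp: sdist_def dist_commute)

lemma subset_sclosure: "A \<subseteq> sclosure A"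
  unfolding sclosure_def by (auto intro: closure_subset[THEN subsetD])

lemma sclosure_mono: "A \<subseteq> B \<Longrightarrow> sclosure A \<subseteq> sclosure B"
  unfolding sclosure_def by (auto dest: closure_mono[OF image_mono])

lemma sclosure_sclosure_subset: "sclosure (sclosure A) \<subseteq> sclosure A"
proof
  fix z
  assume z: "z \<in> sclosure (sclosure A)"
  show "z \<in> sclosure A"
    unfolding sclosure_iff
  proof (intro allI impI)
    fix e :: real
    assume "e > 0"
    then obtain b where b: "b \<in> sclosure A" "sdist z b < e/2"
      using z sclosure_iff[of z "sclosure A"] half_gt_zero by blast
    then obtain a where a: "a \<in> A" "sdist b a < e/2"
      using \<open>e > 0\<close> sclosure_iff[of b A] half_gt_zero by blast
    then show "\<exists>a\<in>A. sdist z a < e"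
      using b sdist_triangle[of z a b] by force
  qed
qed

lemma image_sclosure_subset:
  assumes "\<forall>z. sphere_continuous_at g z"
  shows "g ` sclosure A \<subseteq> sclosure (g ` A)"
proof
  fix w
  assume "w \<in> g ` sclosure A"
  then obtain z where z: "z \<in> sclosure A" "w = g z" by blast
  show "w \<in> sclosure (g ` A)"
    unfolding sclosure_iff
  proof (intro allI impI)
    fix e :: real
    assume "e > 0"
    then obtain d where d: "d > 0" "\<forall>y. sdist z y < d \<longrightarrow> sdist (g z) (g y) < e"
      using assms unfolding sphere_continuous_at_def by blast
    then obtain a where "a \<in> A" "sdist z a < d"
      using z(1) unfolding sclosure_iff by blast
    then show "\<exists>b\<in>g ` A. sdist w b < e"
      using d z(2) by blast
  qed
qed

lemma snd_stereo_eq_1_iff: "snd (stereo z) = 1 \<longleftrightarrow> z = None"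
proof (cases z)
  case (Some x)
  have "1 + (cmod x)^2 > 0"
    by (simp add: add_pos_nonneg)
  then show ?thesis
    using Some by (simp add: stereo_def field_simps)
qed (simp add: stereo_def)

lemma inj_stereo: "inj stereo"
proof
  fix z w
  assume eq: "stereo z = stereo w"
  show "z = w"
  proof (cases "z = None")
    case False
    then obtain x y where zw: "z = Some x" "w = Some y"
      using eq snd_stereo_eq_1_iff by (metis option.exhaust)
    define X Y where "X = (cmod x)^2" and "Y = (cmod y)^2"
    have pos: "1 + X > 0" "1 + Y > 0"
      by (simp_all add: X_def Y_def add_pos_nonneg)
    have "(X - 1) / (1 + X) = (Y - 1) / (1 + Y)"
      using eq zw by (simp add: stereo_def X_def Y_def)
    then have XY: "X = Y"
      using pos by (simp add: field_simps)
    have "2 * x / complex_of_real (1 + X) = 2 * y / complex_of_real (1 + Y)"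
      using eq zw by (simp add: stereo_def X_def Y_def)
    moreover have "complex_of_real (1 + X) \<noteq> 0"
      using pos(1) of_real_eq_0_iff by (metis less_irrefl)
    ultimately show "z = w"
      using XY zw by simp
  qed (use eq snd_stereo_eq_1_iff in metis)
qed

lemma scompact_sclosed_subset:
  assumes "scompact K" "M \<subseteq> K" "sclosure M \<subseteq> M"
  shows "scompact M"
proof -
  have "closure (stereo ` M) \<subseteq> stereo ` K"
    using assms(1,2) compact_imp_closed closure_minimal image_mono
    unfolding scompact_def by metis
  then have "closure (stereo ` M) \<subseteq> stereo ` M"
    using assms(3) unfolding sclosure_def by blast
  then have "closed (stereo ` M)"
    using closure_subset_eq by blast
  moreover have "stereo ` M = stereo ` K \<inter> stereo ` M"
    using assms(2) by blast
  ultimately show ?thesis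
    using assms(1) compact_Int_closed unfolding scompact_def by metis
qed

definition closed_invariant_subsets ::
    "(rsphere \<Rightarrow> rsphere) set \<Rightarrow> rsphere set \<Rightarrow> rsphere set set" where
  "closed_invariant_subsets G K =
     {S. S \<subseteq> K \<and> S \<noteq> {} \<and> sclosure S \<subseteq> S \<and> (\<forall>g\<in>G. g ` S \<subseteq> S)}"

text \<open>Cantor's intersection theorem on the sphere.\<close>

lemma Inter_chain_in_closed_invariant_subsets:
  assumes K: "scompact K" and C: "C \<subseteq> closed_invariant_subsets G K" "C \<noteq> {}" "chain\<^sub>\<subseteq> C"
  shows "\<Inter>C \<in> closed_invariant_subsets G K"
proof -
  have S: "S \<subseteq> K" "S \<noteq> {}" "sclosure S \<subseteq> S" "\<forall>g\<in>G. g ` S \<subseteq> S" if "S \<in> C" for S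
    using that C(1) unfolding closed_invariant_subsets_def by blast+
  have "sclosure (\<Inter>C) \<subseteq> S" if "S \<in> C" for S
    using sclosure_mono[OF Inter_lower[OF that]] S(3)[OF that] by (rule order_trans)
  then have closed: "sclosure (\<Inter>C) \<subseteq> \<Inter>C"
    by (rule Inter_greatest)
  have invariant: "g ` \<Inter>C \<subseteq> \<Inter>C" if "g \<in> G" for g
    using S(4) that by (fastforce intro!: Inter_greatest)
  have "\<Inter>((`) stereo ` C) \<noteq> {}"
  proof (rule compact_chain)
    fix T
    assume "T \<in> (`) stereo ` C"
    then obtain S where "S \<in> C" "T = stereo ` S" by blast
    then show "compact T"
      using S(1,3) scompact_sclosed_subset[OF K] unfolding scompact_def by simp
  next
    show "{} \<notin> (`) stereo ` C"
      using S(2) by auto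
  next
    fix T T'
    assume "T \<in> (`) stereo ` C \<and> T' \<in> (`) stereo ` C"
    then obtain S S' where "S \<in> C" "S' \<in> C" "T = stereo ` S" "T' = stereo ` S'"
      by blast
    then show "T \<subseteq> T' \<or> T' \<subseteq> T"
      using C(3) image_mono unfolding chain_subset_def by metis
  qed
  moreover obtain S0 where "S0 \<in> C"
    using C(2) by blast
  moreover have "stereo ` \<Inter>C = \<Inter>((`) stereo ` C)"
    using image_INT[OF inj_stereo, of C "\<lambda>S. S" S0] \<open>S0 \<in> C\<close> by simp
  ultimately have "\<Inter>C \<noteq> {}"
    by (metis image_empty)
  moreover have "\<Inter>C \<subseteq> K"
    using S(1)[OF \<open>S0 \<in> C\<close>] Inter_lower[OF \<open>S0 \<in> C\<close>] by (rule order_trans[rotated])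
  ultimately show ?thesis
    using closed invariant unfolding closed_invariant_subsets_def by blast
qed

lemma closed_invariant_subsets_minimal_element:
  assumes "scompact K" "K \<in> closed_invariant_subsets G K"
  shows "\<exists>M\<in>closed_invariant_subsets G K. \<forall>X\<in>closed_invariant_subsets G K. X \<subseteq> M \<longrightarrow> X = M"
proof (rule predicate_Zorn)
  show "partial_order_on (closed_invariant_subsets G K)
      (relation_of (\<lambda>X Y. Y \<subseteq> X) (closed_invariant_subsets G K))"
    by (rule partial_order_on_relation_ofI) auto
next
  fix C
  assume "C \<in> Chains (relation_of (\<lambda>X Y. Y \<subseteq> X) (closed_invariant_subsets G K))"
  then have C: "C \<subseteq> closed_invariant_subsets G K" "chain\<^sub>\<subseteq> C"
    unfolding Chains_def relation_of_def chain_subset_def by blast+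
  show "\<exists>U\<in>closed_invariant_subsets G K. \<forall>X\<in>C. U \<subseteq> X"
  proof (cases "C = {}")
    case False
    then show ?thesis
      using Inter_chain_in_closed_invariant_subsets[OF assms(1) C(1) _ C(2)] by blast
  qed (use assms(2) in blast)
qed

lemma sclosure_orbit_in_closed_invariant_subsets:
  assumes M: "M \<in> closed_invariant_subsets G K" "z \<in> M"
    and G: "G \<noteq> {}" "\<forall>g\<in>G. \<forall>y. sphere_continuous_at g y" "\<forall>g\<in>G. \<forall>h\<in>G. g \<circ> h \<in> G"
  shows "sclosure {h z | h. h \<in> G} \<in> closed_invariant_subsets G K"
    and "sclosure {h z | h. h \<in> G} \<subseteq> M"
proof -
  define orb where "orb = {h z | h. h \<in> G}"
  have M': "M \<subseteq> K" "sclosure M \<subseteq> M" "\<forall>g\<in>G. g ` M \<subseteq> M"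
    using M(1) unfolding closed_invariant_subsets_def by blast+
  show sub: "sclosure orb \<subseteq> M"
    using M'(2,3) M(2) sclosure_mono[of orb M] unfolding orb_def by blast
  have "orb \<noteq> {}"
    using G(1) unfolding orb_def by blast
  moreover have "g ` sclosure orb \<subseteq> sclosure orb" if g: "g \<in> G" for g
  proof -
    have "g ` orb \<subseteq> orb"
    proof
      fix w
      assume "w \<in> g ` orb"
      then obtain h where "h \<in> G" "w = (g \<circ> h) z"
        unfolding orb_def by auto
      then show "w \<in> orb"
        using g G(3) unfolding orb_def by blast
    qed
    then show ?thesis
      using image_sclosure_subset[of g orb] sclosure_mono[of "g ` orb" orb] G(2) g by blast
  qed
  ultimately show "sclosure orb \<in> closed_invariant_subsets G K"
    using sub M'(1) subset_sclosure[of orb] sclosure_sclosure_subset[of orb]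
    unfolding closed_invariant_subsets_def by blast
qed

lemma minimal_set_exists:
  assumes K: "scompact K" "K \<noteq> {}" "sclosure K \<subseteq> K" "\<forall>g\<in>G. g ` K \<subseteq> K"
    and G: "G \<noteq> {}" "\<forall>g\<in>G. \<forall>z. sphere_continuous_at g z" "\<forall>g\<in>G. \<forall>h\<in>G. g \<circ> h \<in> G"
  shows "\<exists>M\<subseteq>K. minimal_set G M"
proof -
  have "K \<in> closed_invariant_subsets G K"
    using K unfolding closed_invariant_subsets_def by blast
  then obtain M where M: "M \<in> closed_invariant_subsets G K"
    and min: "\<forall>X\<in>closed_invariant_subsets G K. X \<subseteq> M \<longrightarrow> X = M"
    using closed_invariant_subsets_minimal_element[OF K(1)] by blast
  have M': "M \<subseteq> K" "M \<noteq> {}" "sclosure M \<subseteq> M"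
    using M unfolding closed_invariant_subsets_def by blast+
  have "M = sclosure {h z | h. h \<in> G}" if "z \<in> M" for z
    using min[rule_format, OF sclosure_orbit_in_closed_invariant_subsets[OF M that G]] by simp
  moreover have "scompact M"
    using scompact_sclosed_subset[OF K(1) M'(1,3)] .
  ultimately show ?thesis
    using M' unfolding minimal_set_def by blast
qed

lemma minimal_set_eq_sclosure_orbit:
  assumes "minimal_set H K" "z \<in> K"
  shows "K = sclosure {h z | h. h \<in> H}"
proof -
  have "\<forall>z\<in>K. K = sclosure {h z | h. h \<in> H}"
    using assms(1) unfolding minimal_set_def by (elim conjE)
  then show ?thesis
    using assms(2) by (rule bspec)
qed

lemma minimal_set_invariant:
  assumes "minimal_set H K" "h \<in> H" "z \<in> K"
  shows "h z \<in> K"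
proof -
  have "h z \<in> {h z | h. h \<in> H}"
    using assms(2) by blast
  then have "h z \<in> sclosure {h z | h. h \<in> H}"
    by (rule subsetD[OF subset_sclosure])
  then show ?thesis
    by (subst minimal_set_eq_sclosure_orbit[OF assms(1,3)])
qed

lemma minimal_set_sclosed:
  assumes "minimal_set H K"
  shows "sclosure K \<subseteq> K"
proof -
  obtain z where "z \<in> K"
    using assms unfolding minimal_set_def by blast
  show ?thesis
    by (subst (1 2) minimal_set_eq_sclosure_orbit[OF assms \<open>z \<in> K\<close>])
      (rule sclosure_sclosure_subset)
qed

lemma minimal_sets_disjoint:
  assumes "minimal_set H K1" "minimal_set H K2" "K1 \<noteq> K2"
  shows "K1 \<inter> K2 = {}"
proof (rule ccontr)
  assume "K1 \<inter> K2 \<noteq> {}"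
  then obtain z where z: "z \<in> K1" "z \<in> K2"
    by blast
  show False
    using minimal_set_eq_sclosure_orbit[OF assms(1) z(1)] minimal_set_eq_sclosure_orbit[OF assms(2) z(2)]
      assms(3) by simp
qed

section \<open>Semigroups generated by words\<close>

lemma gen_semigroup_subset:
  assumes "S \<subseteq> gen_semigroup T"
  shows "gen_semigroup S \<subseteq> gen_semigroup T"
proof
  fix h
  assume "h \<in> gen_semigroup S"
  then show "h \<in> gen_semigroup T"
    by induction (use assms in \<open>blast intro: gen_semigroup.comp\<close>)+
qed

lemma gen_semigroup_sphere_holomorphic_at:
  assumes "\<forall>g\<in>S. \<forall>z. sphere_holomorphic_at g z" "h \<in> gen_semigroup S"
  shows "sphere_holomorphic_at h z"
  using assms(2)
proof (induction arbitrary: z)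
  case (comp h1 h2)
  then show ?case using sphere_holomorphic_at_comp by blast
qed (use assms(1) in blast)

lemma word_map_in_gen_semigroup:
  assumes "set ws \<subseteq> {..<length gs}" "ws \<noteq> []"
  shows "word_map gs ws \<in> gen_semigroup (set gs)"
  using assms
proof (induction ws)
  case (Cons i ws)
  have gi: "gs ! i \<in> gen_semigroup (set gs)"
    using Cons.prems(1) by (auto intro: gen_semigroup.gen)
  show ?case
  proof (cases "ws = []")
    case False
    then have "word_map gs ws \<in> gen_semigroup (set gs)"
      using Cons by simp
    then show ?thesis
      using gi by (simp only: word_map.simps gen_semigroup.comp)
  qed (use gi in simp)
qed simp

lemma word_map_in_insert_id:
  "set ws \<subseteq> {..<length gs} \<Longrightarrow> word_map gs ws \<in> insert id (gen_semigroup (set gs))"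
  using word_map_in_gen_semigroup[of ws gs] by (cases "ws = []") auto

lemma critical_point_word_map:
  assumes hol: "\<forall>g\<in>set gs. \<forall>z. sphere_holomorphic_at g z"
    and ws: "set ws \<subseteq> {..<length gs}" and crit: "critical_point (word_map gs ws) z"
  shows "\<exists>h\<in>insert id (gen_semigroup (set gs)). \<exists>v\<in>critical_values gs. word_map gs ws z = h v"
  using ws crit
proof (induction ws arbitrary: z)
  case Nil
  then show ?case using not_critical_point_id by (metis word_map.simps(1))
next
  case (Cons i ws)
  have gi: "gs ! i \<in> set gs" and ws: "set ws \<subseteq> {..<length gs}"
    using Cons.prems(1) by auto
  have "sphere_holomorphic_at (word_map gs ws) y" for y
    using word_map_in_insert_id[OF ws] gen_semigroup_sphere_holomorphic_at[OF hol]
      sphere_holomorphic_at_id by auto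
  moreover have "critical_point (word_map gs ws \<circ> gs ! i) z"
    using Cons.prems(2) by (simp only: word_map.simps)
  ultimately have "critical_point (gs ! i) z \<or> critical_point (word_map gs ws) ((gs ! i) z)"
    using critical_point_comp[of "gs ! i" z "word_map gs ws"] hol gi by blast
  then show ?case
  proof
    assume "critical_point (gs ! i) z"
    then have "(gs ! i) z \<in> critical_values gs"
      unfolding critical_values_def using gi by blast
    then show ?thesis
      using word_map_in_insert_id[OF ws] by auto
  qed (use Cons.IH[OF ws] in simp)
qed

lemma equicont_at_subset: "H' \<subseteq> H \<Longrightarrow> equicont_at H x \<Longrightarrow> equicont_at H' x"
  unfolding equicont_at_def by (meson subsetD)

lemma fatou_antimono: "H' \<subseteq> H \<Longrightarrow> fatou H \<subseteq> fatou H'"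
  unfolding fatou_def using equicont_at_subset by blast

lemma equicont_at_image:
  assumes g: "sphere_open_at g x" and comp: "\<forall>k\<in>H. k \<circ> g \<in> H" and eq: "equicont_at H x"
  shows "equicont_at H (g x)"
  unfolding equicont_at_def
proof (intro allI impI)
  fix e :: real
  assume "e > 0"
  then obtain d1 where d1: "d1 > 0" "\<forall>y. sdist x y < d1 \<longrightarrow> (\<forall>h\<in>H. sdist (h x) (h y) < e)"
    using eq unfolding equicont_at_def by blast
  then obtain d where d: "d > 0" "\<forall>y. sdist (g x) y < d \<longrightarrow> (\<exists>x'. sdist x x' < d1 \<and> g x' = y)"
    using g unfolding sphere_open_at_def by blast
  have "sdist (h (g x)) (h y) < e" if y: "sdist (g x) y < d" and h: "h \<in> H" for h y
  proof -
    obtain x' where "sdist x x' < d1" "g x' = y"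
      using d y by blast
    then show ?thesis
      using d1(2) comp h by fastforce
  qed
  then show "\<exists>d>0. \<forall>y. sdist (g x) y < d \<longrightarrow> (\<forall>h\<in>H. sdist (h (g x)) (h y) < e)"
    using d(1) by blast
qed

lemma fatou_image:
  assumes g: "\<forall>z. sphere_open_at g z" and comp: "\<forall>k\<in>H. k \<circ> g \<in> H" and x: "x \<in> fatou H"
  shows "g x \<in> fatou H"
proof -
  obtain r where r: "r > 0" "\<forall>x'. sdist x x' < r \<longrightarrow> equicont_at H x'"
    using x unfolding fatou_def by blast
  then obtain d where d: "d > 0" "\<forall>y. sdist (g x) y < d \<longrightarrow> (\<exists>x'. sdist x x' < r \<and> g x' = y)"
    using g unfolding sphere_open_at_def by blast
  have "equicont_at H y" if "sdist (g x) y < d" for y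
    using d r that equicont_at_image[OF g[rule_format] comp] by metis
  then show ?thesis
    unfolding fatou_def using d(1) by blast
qed

lemma julia_word_map_preimage:
  assumes "\<forall>g\<in>set gs. \<forall>z. sphere_open_at g z"
    and "set ws \<subseteq> {..<length gs}" "word_map gs ws x \<in> julia (gen_semigroup (set gs))"
  shows "x \<in> julia (gen_semigroup (set gs))"
  using assms(2,3)
proof (induction ws arbitrary: x)
  case (Cons i ws)
  have gi: "gs ! i \<in> set gs"
    using Cons.prems(1) by simp
  then have "\<forall>k\<in>gen_semigroup (set gs). k \<circ> (gs ! i) \<in> gen_semigroup (set gs)"
    by (auto intro: gen_semigroup.comp gen_semigroup.gen)
  moreover have "(gs ! i) x \<in> julia (gen_semigroup (set gs))"
    using Cons by simp
  ultimately show ?case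
    using fatou_image assms(1) gi unfolding julia_def by blast
qed simp

text \<open>By backward invariance of the Julia set, the first letter at which two words differ
  would put a point into the preimages of the Julia set under two different generators.\<close>

lemma word_eq_if_julia:
  assumes op: "\<forall>g\<in>set gs. \<forall>z. sphere_open_at g z" and A2: "A2 gs"
    and "set w1 \<subseteq> {..<length gs}" "set w2 \<subseteq> {..<length gs}" "length w1 = length w2"
    and "word_map gs w1 z \<in> julia (gen_semigroup (set gs))"
    and "word_map gs w2 z \<in> julia (gen_semigroup (set gs))"
  shows "w1 = w2"
  using assms(3-)
proof (induction w1 arbitrary: w2 z)
  case (Cons a w1)
  obtain b w2' where w2: "w2 = b # w2'"
    using Cons.prems(3) by (cases w2) auto
  have j1: "word_map gs w1 ((gs ! a) z) \<in> julia (gen_semigroup (set gs))"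
    and j2: "word_map gs w2' ((gs ! b) z) \<in> julia (gen_semigroup (set gs))"
    using Cons.prems(4,5) w2 by simp_all
  have ab: "a < length gs" "b < length gs" "set w1 \<subseteq> {..<length gs}" "set w2' \<subseteq> {..<length gs}"
    using Cons.prems(1,2) w2 by auto
  show ?case
  proof (cases "a = b")
    case True
    then show ?thesis
      using Cons.IH[OF ab(3,4) _ j1] j2 Cons.prems(3) w2 by simp
  next
    case False
    have "z \<in> (gs ! a) -` julia (gen_semigroup (set gs)) \<inter> (gs ! b) -` julia (gen_semigroup (set gs))"
      using julia_word_map_preimage[OF op ab(3) j1] julia_word_map_preimage[OF op ab(4) j2] by simp
    then show ?thesis
      using A2 ab(1,2) False unfolding A2_def by blast
  qed
qed simp

lemma words_of_length_subset_gen_semigroup: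
  assumes "n \<ge> 1"
  shows "words_of_length gs n \<subseteq> gen_semigroup (set gs)"
  using assms word_map_in_gen_semigroup unfolding words_of_length_def by fastforce

lemma postcrit_subset_of_words:
  assumes hol: "\<forall>g\<in>set gs. \<forall>z. sphere_holomorphic_at g z"
    and fs: "set fs \<subseteq> words_of_length gs n" and n: "n \<ge> 1"
  shows "postcrit fs \<subseteq> postcrit gs"
proof -
  define H where "H = insert id (gen_semigroup (set gs))"
  have G: "insert id (gen_semigroup (set fs)) \<subseteq> H"
    using gen_semigroup_subset[OF order_trans[OF fs words_of_length_subset_gen_semigroup[OF n]]]
    unfolding H_def by blast
  have H_comp: "h \<circ> h' \<in> H" if "h \<in> H" "h' \<in> H" for h h'
    using that unfolding H_def by (auto intro: gen_semigroup.comp)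
  have crit: "\<exists>h\<in>H. \<exists>w\<in>critical_values gs. v = h w" if v: "v \<in> critical_values fs" for v
  proof -
    obtain f y where "f \<in> set fs" "critical_point f y" "v = f y"
      using v unfolding critical_values_def by blast
    moreover obtain ws where "f = word_map gs ws" "set ws \<subseteq> {..<length gs}"
      using fs \<open>f \<in> set fs\<close> unfolding words_of_length_def by blast
    ultimately show ?thesis
      using critical_point_word_map[OF hol] unfolding H_def by metis
  qed
  have "(\<Union>h\<in>insert id (gen_semigroup (set fs)). h ` critical_values fs)
      \<subseteq> (\<Union>h\<in>H. h ` critical_values gs)"
  proof clarify
    fix h v
    assume h: "h \<in> insert id (gen_semigroup (set fs))" and v: "v \<in> critical_values fs"
    obtain h' w where h': "h' \<in> H" "w \<in> critical_values gs" "v = h' w"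
      using crit[OF v] by blast
    have "h \<circ> h' \<in> H"
      using H_comp G h h'(1) by blast
    moreover have "h v = (h \<circ> h') w"
      using h'(3) by simp
    ultimately show "h v \<in> (\<Union>h\<in>H. h ` critical_values gs)"
      using h'(2) by blast
  qed
  then show ?thesis
    unfolding postcrit_def H_def by (rule sclosure_mono)
qed

lemma A1_of_words:
  assumes "A1 gs" "\<forall>g\<in>set gs. \<forall>z. sphere_holomorphic_at g z"
    and "set fs \<subseteq> words_of_length gs n" "n \<ge> 1"
  shows "A1 fs"
proof -
  have "gen_semigroup (set fs) \<subseteq> gen_semigroup (set gs)"
    using assms(3,4) words_of_length_subset_gen_semigroup gen_semigroup_subset by blast
  then show ?thesis
    using assms postcrit_subset_of_words fatou_antimono unfolding A1_def by blast
qed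

lemma A2_of_words:
  assumes op: "\<forall>g\<in>set gs. \<forall>z. sphere_open_at g z" and A2: "A2 gs"
    and fs: "distinct fs" "set fs \<subseteq> words_of_length gs n" and n: "n \<ge> 1"
  shows "A2 fs"
  unfolding A2_def
proof (intro allI impI)
  fix i j
  assume ij: "i < length fs" "j < length fs" "i \<noteq> j"
  define J where "J = julia (gen_semigroup (set gs))"
  have "gen_semigroup (set fs) \<subseteq> gen_semigroup (set gs)"
    using fs(2) n words_of_length_subset_gen_semigroup gen_semigroup_subset by blast
  then have JJ: "julia (gen_semigroup (set fs)) \<subseteq> J"
    using fatou_antimono unfolding julia_def J_def by blast
  obtain w1 where w1: "fs ! i = word_map gs w1" "length w1 = n" "set w1 \<subseteq> {..<length gs}"
    using fs(2) nth_mem[OF ij(1)] unfolding words_of_length_def by blast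
  obtain w2 where w2: "fs ! j = word_map gs w2" "length w2 = n" "set w2 \<subseteq> {..<length gs}"
    using fs(2) nth_mem[OF ij(2)] unfolding words_of_length_def by blast
  have "fs ! i \<noteq> fs ! j"
    using fs(1) ij nth_eq_iff_index_eq by blast
  then have no: "\<not> (word_map gs w1 z \<in> J \<and> word_map gs w2 z \<in> J)" for z
    using word_eq_if_julia[OF op A2 w1(3) w2(3)] w1 w2 unfolding J_def by auto
  show "fs ! i -` julia (gen_semigroup (set fs)) \<inter> fs ! j -` julia (gen_semigroup (set fs)) = {}"
  proof (rule equals0I)
    fix z
    assume "z \<in> fs ! i -` julia (gen_semigroup (set fs)) \<inter> fs ! j -` julia (gen_semigroup (set fs))"
    then have "word_map gs w1 z \<in> J" "word_map gs w2 z \<in> J"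
      using JJ w1(1) w2(1) by auto
    then show False
      using no by blast
  qed
qed

lemma A3_of_subsemigroup:
  assumes A3: "A3 gs" and fs: "fs \<noteq> []" "set fs \<subseteq> gen_semigroup (set gs)"
    and cont: "\<forall>h\<in>gen_semigroup (set gs). \<forall>z. sphere_continuous_at h z"
  shows "A3 fs"
proof -
  define H G where "H = gen_semigroup (set gs)" and "G = gen_semigroup (set fs)"
  have GH: "G \<subseteq> H"
    using gen_semigroup_subset[OF fs(2)] unfolding G_def H_def .
  have "hd fs \<in> G"
    using fs(1) unfolding G_def by (simp add: gen_semigroup.gen)
  then have G: "G \<noteq> {}" "\<forall>g\<in>G. \<forall>z. sphere_continuous_at g z" "\<forall>g\<in>G. \<forall>h\<in>G. g \<circ> h \<in> G"
    using GH cont unfolding G_def H_def by (auto intro: gen_semigroup.comp)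
  have sub: "\<exists>M\<subseteq>K. minimal_set G M" if K: "minimal_set H K" for K
  proof (rule minimal_set_exists[OF _ _ _ _ G])
    show "scompact K" "K \<noteq> {}"
      using K unfolding minimal_set_def by blast+
    show "sclosure K \<subseteq> K"
      using minimal_set_sclosed[OF K] .
    show "\<forall>g\<in>G. g ` K \<subseteq> K"
      using minimal_set_invariant[OF K] GH by blast
  qed
  obtain K1 K2 where K: "K1 \<noteq> K2" "minimal_set H K1" "minimal_set H K2"
    using A3 unfolding A3_def H_def by blast
  obtain M1 M2 where M: "M1 \<subseteq> K1" "minimal_set G M1" "M2 \<subseteq> K2" "minimal_set G M2"
    using sub[OF K(2)] sub[OF K(3)] by blast
  have "M1 \<noteq> M2"
    using minimal_sets_disjoint[OF K(2,3,1)] M unfolding minimal_set_def by blast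
  then show ?thesis
    using M unfolding A3_def G_def by blast
qed

theorem mainTheorem12:
  fixes gs fs :: "(rsphere \<Rightarrow> rsphere) list" and n s :: nat
  assumes deg: "\<forall>g\<in>set gs. \<exists>d\<ge>2. rat_map_of_degree g d"
    and hyp: "A1 gs" "A2 gs" "A3 gs"
    and n: "n \<ge> 2" and s: "s \<ge> 1"
    and fs_len: "length fs = s + 1" and fs_dist: "distinct fs"
    and fs_in: "set fs \<subseteq> words_of_length gs n"
  shows "A1 fs \<and> A2 fs \<and> A3 fs \<and>
    ((\<forall>g\<in>set gs. is_polynomial_map g) \<and> bounded {z. Some z \<in> postcrit gs}
       \<longrightarrow> bounded {z. Some z \<in> postcrit fs})"
proof -
  have nc: "\<forall>g\<in>set gs. \<forall>z. sphere_nonconstant_holomorphic_at g z"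
    using deg rat_map_nonconstant_holomorphic_at by (meson le_trans one_le_numeral)
  then have hol: "\<forall>g\<in>set gs. \<forall>z. sphere_holomorphic_at g z"
    unfolding sphere_nonconstant_holomorphic_at_def by blast
  have n1: "n \<ge> 1" and fs_ne: "fs \<noteq> []"
    using n fs_len by auto
  have "\<forall>h\<in>gen_semigroup (set gs). \<forall>z. sphere_continuous_at h z"
    using gen_semigroup_sphere_holomorphic_at[OF hol] sphere_holomorphic_at_imp_continuous_at by blast
  then have "A3 fs"
    using A3_of_subsemigroup[OF hyp(3) fs_ne] fs_in words_of_length_subset_gen_semigroup[OF n1]
    by blast
  moreover have "A2 fs"
    using A2_of_words[OF _ hyp(2) fs_dist fs_in n1] nc sphere_nonconstant_holomorphic_at_imp_open_at
    by blast
  moreover have "postcrit fs \<subseteq> postcrit gs"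
    using postcrit_subset_of_words[OF hol fs_in n1] .
  then have "bounded {z. Some z \<in> postcrit gs} \<longrightarrow> bounded {z. Some z \<in> postcrit fs}"
    by (auto elim: bounded_subset)
  ultimately show ?thesis
    using A1_of_words[OF hyp(1) hol fs_in n1] by blast
qed

end
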